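(* For any coprime $r>1$ and $0<a<r$, on the Danilov resolution of $\frac1r(1,a,r-a)$ one has $R_1=D_X-E_1$, i.e. $R_1=\sum_{i=0}^r e_1^*(p_i)D_i$.
   Context: Notation: for integers $s$ and $t>0$, $\langle s\rangle_t$ is the least non-negative integer congruent to $s$ modulo $t$. A pair of integers $(r,a)$ is admissible if $r\ge1$, $0\le a<r$, $\gcd(r,a)=1$ (so $a=0$ only for $r=1$). For admissible $(r,a)$ put $N(r,a)=\mathbb Z^3+\mathbb Z\cdot\frac1r(1,a,r-a)\subset\mathbb Q^3$; $e_1,e_2,e_3$ is the standard basis, $e_j^*$ the $j$-th coordinate function, and $\Delta(r,a)$ the cone spanned by $e_1,e_2,e_3$. Let $b$ be an inverse of $a$ modulo $r$ and $p_i=\frac1r(\langle -ib\rangle_r,r-i,i)$, $i=0,\dots,r$ (so $p_0=e_2$, $p_r=e_3$, $p_{r-a}=\frac1r(1,a,r-a)$). For $r>1$ let $(r_L,a_L)=(r-a,\langle r\rangle_{r-a})$, $(r_R,a_R)=(a,\langle -r\rangle_a)$; there are lattice isomorphisms $L:N(r_L,a_L)\to N(r,a)$, $R:N(r_R,a_R)\to N(r,a)$ with $L(e_1)=e_1$, $L(e_2)=e_2$, $L(e_3)=p_{r-a}$, $R(e_1)=e_1$, $R(e_2)=p_{r-a}$, $R(e_3)=e_3$. The Danilov fan $\Sigma(r,a)$ is defined recursively: $\Sigma(1,0)$ is $\Delta(1,0)$ with its faces; for $r>1$, $\Sigma(r,a)$ consists of the cone spanned by $e_2,e_3,p_{r-a}$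 with its faces, together with $L(\Sigma(r_L,a_L))$ and $R(\Sigma(r_R,a_R))$. The Danilov resolution $Y$ is the smooth toric variety of $\Sigma(r,a)$, with torus $T$; its rays are spanned by $e_1,p_0,\dots,p_r$; $D_i$ is the $T$-invariant prime divisor of the ray through $p_i$ and $E_j$ that of $e_j$. The permutation $\tau(r,a,\cdot)$ of $\{0,\dots,r-1\}$: if $a\in\{1,r-1\}$, $\tau(r,a,i)=\langle ai-1\rangle_r$; otherwise $\tau(r,a,i)=\tau(r-a,\langle r\rangle_{r-a},\langle i\rangle_{r-a})$ for $i\ge a$ and $\tau(r,a,i)=(r-a)+\tau(a,\langle -r\rangle_a,i)$ for $i<a$. With indices mod $r$, define $Z_i=\sum_{k=\tau(r,a,i)+1}^{r}D_k$ ($i=0,\dots,r-1$). Define the $\mathbb Q$-divisors $D_X=E_1+\sum_{i=0}^r e_1^*(p_i)D_i$, $D_Z=\sum_{i=0}^r e_3^*(p_i)D_i$, and let $R_0,\dots,R_{r-1}$ be the unique $\mathbb Q$-divisors with $R_0=0$ and $Z_i=D_Z+R_i-R_{i-a}$ for all $i$ (indices mod $r$). *)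

theory Defs
  imports Complex_Main "HOL-Library.Function_Algebras"
begin

text \<open>T-invariant prime divisors of the Danilov resolution Y: the rays are spanned by
  e_1 (divisor E_1) and p_0, ..., p_r (divisors D_0, ..., D_r).\<close>
datatype ray = RayE1 | RayD nat

text \<open>A T-invariant Q-divisor on Y: its coefficient at each T-invariant prime divisor.
  Only the rays RayE1 and RayD k with k \<le> r exist; coefficients elsewhere must vanish.\<close>
type_synonym qdiv = "ray \<Rightarrow> rat"

definition is_qdiv :: "nat \<Rightarrow> qdiv \<Rightarrow> bool" where
  "is_qdiv r X \<longleftrightarrow> (\<forall>k>r. X (RayD k) = 0)"

definition Ddiv :: "nat \<Rightarrow> qdiv" where
  "Ddiv k = (\<lambda>\<rho>. if \<rho> = RayD k then 1 else 0)"

definition E1div :: qdiv where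
  "E1div = (\<lambda>\<rho>. if \<rho> = RayE1 then 1 else 0)"

definition sdiv :: "rat \<Rightarrow> qdiv \<Rightarrow> qdiv" where
  "sdiv c X = (\<lambda>\<rho>. c * X \<rho>)"

definition binv :: "nat \<Rightarrow> nat \<Rightarrow> nat" where
  "binv r a = (SOME b. (a * b) mod r = 1 mod r)"

text \<open>e_1^*(p_i) = <-ib>_r / r  and  e_3^*(p_i) = i / r.\<close>
definition e1p :: "nat \<Rightarrow> nat \<Rightarrow> nat \<Rightarrow> rat" where
  "e1p r a i = of_int ((- int i * int (binv r a)) mod int r) / of_nat r"

definition e3p :: "nat \<Rightarrow> nat \<Rightarrow> rat" where
  "e3p r i = of_nat i / of_nat r"

text \<open>The permutation tau(r,a,.). The extra guards a = 0 / a \<ge> r only matter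
  for non-admissible inputs (they make the recursion total).\<close>
function tau :: "nat \<Rightarrow> nat \<Rightarrow> nat \<Rightarrow> nat" where
  "tau r a i =
     (if a = 1 \<or> a = r - 1 \<or> a = 0 \<or> r \<le> a
      then nat ((int a * int i - 1) mod int r)
      else if a \<le> i then tau (r - a) (r mod (r - a)) (i mod (r - a))
      else (r - a) + tau a (nat ((- int r) mod int a)) i)"
  by pat_completeness auto
termination
  by (relation "measure (\<lambda>(r, a, i). r)") auto

definition Zdiv :: "nat \<Rightarrow> nat \<Rightarrow> nat \<Rightarrow> qdiv" where
  "Zdiv r a i = (\<Sum>k\<in>{tau r a i + 1..r}. Ddiv k)"

definition DXdiv :: "nat \<Rightarrow> nat \<Rightarrow> qdiv" where
  "DXdiv r a = E1div + (\<Sum>i\<in>{0..r}. sdiv (e1p r a i) (Ddiv i))"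

definition DZdiv :: "nat \<Rightarrow> nat \<Rightarrow> qdiv" where
  "DZdiv r a = (\<Sum>i\<in>{0..r}. sdiv (e3p r i) (Ddiv i))"

text \<open>R = (R_0, ..., R_{r-1}) (stored as a function on nat, zero from index r on)
  satisfies R_0 = 0 and Z_i = D_Z + R_i - R_{i-a} for all i mod r.\<close>
definition Rcond :: "nat \<Rightarrow> nat \<Rightarrow> (nat \<Rightarrow> qdiv) \<Rightarrow> bool" where
  "Rcond r a R \<longleftrightarrow> R 0 = 0 \<and> (\<forall>i\<ge>r. R i = 0) \<and> (\<forall>i<r. is_qdiv r (R i)) \<and>
     (\<forall>i<r. Zdiv r a i = DZdiv r a + R i - R ((i + r - a) mod r))"

end

theory Submission
  imports Defs
begin

text \<open>Let \<open>b\<close> be the inverse of \<open>a\<close> modulo \<open>r\<close>. Unwinding \<open>R\<^sub>i = R\<^sub>i\<^sub>-\<^sub>a + Z\<^sub>i - D\<^sub>Z\<close>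
  from \<open>R\<^sub>0 = 0\<close> along the cycle \<open>0, a, 2a, \<dots>\<close> gives the unique solution; it closes up
  because \<open>\<tau>\<close> is a permutation, so \<open>\<Sum>\<^sub>i Z\<^sub>i = r D\<^sub>Z\<close>. In particular
  \<open>R\<^sub>1 = \<Sum>\<^sub>m\<^sub>=\<^sub>1\<^sup>b (Z\<^sub>m\<^sub>a - D\<^sub>Z)\<close>, whose coefficient at \<open>D\<^sub>k\<close> is
  \<open>#{1 \<le> m \<le> b. \<tau>(ma) < k} - kb/r\<close>, while \<open>e\<^sub>1\<^sup>*(p\<^sub>k) = \<lceil>kb/r\<rceil> - kb/r\<close>.
  Writing \<open>i = ma mod r\<close>, the theorem thus reduces to: \<open>ib mod r \<in> [1, b]\<close> exactly when
  \<open>\<lceil>tb/r\<rceil>\<close> jumps at \<open>t = \<tau>(i)\<close>. This follows along the Danilov recursion, since \<open>b/r\<close>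
  has the Farey neighbours \<open>(b - c)/(r - a)\<close> and \<open>c/a\<close>, \<open>c = (ab - 1)/r\<close>, whose numerators
  are the inverses belonging to the two subfans, and ceilings of multiples of Farey neighbours
  agree in the relevant range.\<close>

section \<open>Ceilings of multiples of a fraction\<close>

text \<open>\<open>ceil_frac q p t = \<lceil>t p / q\<rceil>\<close> for \<open>q > 0\<close>.\<close>

definition ceil_frac :: "int \<Rightarrow> int \<Rightarrow> int \<Rightarrow> int" where
  "ceil_frac q p t = - ((- t * p) div q)"

definition ceil_jump :: "int \<Rightarrow> int \<Rightarrow> int \<Rightarrow> int" where
  "ceil_jump q p t = ceil_frac q p (t + 1) - ceil_frac q p t"

lemma ceil_frac_eq_iff:
  assumes "q > 0"
  shows "ceil_frac q p t = n \<longleftrightarrow> (n - 1) * q < t * p \<and> t * p \<le> n * q"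
proof -
  have "(- t * p) div q = - n \<longleftrightarrow> - n * q \<le> - t * p \<and> - t * p < - n * q + q"
  proof
    assume h: "(- t * p) div q = - n"
    have "- t * p = q * (- n) + (- t * p) mod q" using h by (metis div_mult_mod_eq mult.commute)
    moreover have "0 \<le> (- t * p) mod q" "(- t * p) mod q < q" using assms by auto
    ultimately show "- n * q \<le> - t * p \<and> - t * p < - n * q + q" by (simp add: algebra_simps)
  next
    assume "- n * q \<le> - t * p \<and> - t * p < - n * q + q"
    then show "(- t * p) div q = - n"
      by (intro int_div_pos_eq[where r = "- t * p + n * q"]) (simp_all add: algebra_simps)
  qed
  then show ?thesis unfolding ceil_frac_def by (auto simp: algebra_simps)
qed

lemma ceil_frac_add_mult: "q > 0 \<Longrightarrow> ceil_frac q p (t + k * q) = ceil_frac q p t + k * p"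
proof -
  assume "q > 0"
  have "- (t + k * q) * p = - t * p + (- k * p) * q" by (simp add: algebra_simps)
  with \<open>q > 0\<close> show ?thesis unfolding ceil_frac_def by (simp only: div_mult_self1)
qed

lemma ceil_frac_uminus: "ceil_frac q p (- t) = ceil_frac q (- p) t"
  unfolding ceil_frac_def by simp

lemma ceil_jump_add_mult: "q > 0 \<Longrightarrow> ceil_jump q p (t + k * q) = ceil_jump q p t"
  unfolding ceil_jump_def using ceil_frac_add_mult[of q p "t + 1" k] ceil_frac_add_mult[of q p t k]
  by (simp add: algebra_simps)

lemma ceil_jump_mod: "q > 0 \<Longrightarrow> ceil_jump q p (t mod q) = ceil_jump q p t"
  using ceil_jump_add_mult[of q p "t mod q" "t div q"] by (simp add: mod_div_mult_eq)

lemma ceil_jump_pred: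
  assumes q: "q > 0" and p: "0 < p" "p < q"
  shows "ceil_jump q p (t - 1) = (if 1 \<le> (t * p) mod q \<and> (t * p) mod q \<le> p then 1 else 0)"
proof -
  define m where "m = (t * p) mod q"
  have tp: "t * p = (t * p) div q * q + m" and m: "0 \<le> m" "m < q"
    unfolding m_def using q by simp_all
  have "ceil_frac q p t = (t * p) div q + (if m > 0 then 1 else 0)"
    using tp m by (subst ceil_frac_eq_iff[OF q]) (auto simp: algebra_simps)
  moreover have "ceil_frac q p (t - 1) = (t * p) div q + (if m > p then 1 else 0)"
    using tp m p by (subst ceil_frac_eq_iff[OF q]) (auto simp: algebra_simps)
  ultimately show ?thesis unfolding ceil_jump_def m_def using p by auto
qed

lemma ceil_jump_pred_self:
  assumes "1 < q"
  shows "ceil_jump q (q - 1) (t - 1) = (if q dvd t then 0 else 1)"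
proof -
  have "(t * (q - 1)) mod q = (- t) mod q"
    using mod_mult_self1[of "- t" t q] by (simp add: algebra_simps)
  moreover have "(- t) mod q \<le> q - 1" using assms by simp
  moreover have "1 \<le> (- t) mod q \<longleftrightarrow> \<not> q dvd t"
  proof -
    have "(- t) mod q = 0 \<longleftrightarrow> q dvd t" by (simp flip: dvd_eq_mod_eq_0)
    moreover have "0 \<le> (- t) mod q" using assms by simp
    ultimately show ?thesis by auto
  qed
  ultimately show ?thesis using ceil_jump_pred[of q "q - 1" t] assms by auto
qed

lemma sum_ceil_jump: "(\<Sum>t<k. ceil_jump q p (int t)) = ceil_frac q p (int k)"
proof -
  have "(\<Sum>t<k. ceil_jump q p (int t)) = (\<Sum>t<k. ceil_frac q p (int (Suc t)) - ceil_frac q p (int t))"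
    unfolding ceil_jump_def by (simp add: add.commute)
  also have "\<dots> = ceil_frac q p (int k) - ceil_frac q p (int 0)"
    by (rule sum_lessThan_telescope)
  also have "ceil_frac q p (int 0) = 0" by (simp add: ceil_frac_def)
  finally show ?thesis by simp
qed

lemma sum_lessThan_if_less:
  "k \<le> r \<Longrightarrow> (\<Sum>t<r. if t < k then f t else 0) = (\<Sum>t<k. f t)" for k r :: nat
  by (rule sum.mono_neutral_cong_right) auto

text \<open>Between the Farey neighbours \<open>p/q < p'/q'\<close> there is no fraction with denominator
  smaller than \<open>q + q'\<close>; hence the ceilings of \<open>j p/q\<close> and \<open>j p'/q'\<close> agree for such \<open>j\<close>.\<close>

lemma no_int_between_farey:
  fixes q q' p p' j n :: int
  assumes "q > 0" "q' > 0" "p' * q - p * q' = 1" "0 < j" "j < q + q'"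
    and "j * p < n * q" "n * q' < j * p'"
  shows False
proof -
  have "q' * (n * q - j * p) + q * (j * p' - n * q') = j * (p' * q - p * q')"
    by (simp add: algebra_simps)
  also have "\<dots> = j" using assms by simp
  finally have "q' * (n * q - j * p) + q * (j * p' - n * q') = j" .
  moreover have "q' \<le> q' * (n * q - j * p)" "q \<le> q * (j * p' - n * q')"
    using assms by (simp_all add: mult_le_cancel_left1)
  ultimately show False using assms by linarith
qed

lemma ceil_frac_farey:
  fixes q p q' p' j :: int
  assumes q: "q > 0" and q': "q' > 0" and farey: "p' * q - p * q' = 1"
    and j: "0 \<le> j" "j < q + q'" and ndvd: "j = 0 \<or> \<not> q dvd j"
  shows "ceil_frac q p j = ceil_frac q' p' j"
proof (cases "j = 0")
  case True
  then show ?thesis by (simp add: ceil_frac_def)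
next
  case False
  define n where "n = ceil_frac q p j"
  have n: "(n - 1) * q < j * p" "j * p \<le> n * q"
    using ceil_frac_eq_iff[OF q] n_def by auto
  have "coprime q p"
    using farey by (metis coprime_iff_gcd_eq_1 dvd_diff dvd_mult gcd_dvd1 gcd_dvd2 is_unit_gcd mult.commute)
  then have "j * p \<noteq> n * q"
    using False ndvd by (metis coprime_dvd_mult_left_iff dvd_triv_right)
  with n have "j * p < n * q" by simp
  with False j have "j * p' \<le> n * q'"
    using no_int_between_farey[OF q q' farey] by force
  moreover have "(n - 1) * q' < j * p'"
  proof (rule ccontr)
    assume "\<not> ?thesis"
    then have "j * p' * q \<le> (n - 1) * q' * q" using q by (simp add: mult_right_mono)
    moreover have "(n - 1) * q * q' < j * p * q'" using mult_strict_right_mono[OF n(1) q'] .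
    ultimately have "j * (p' * q - p * q') < 0" by (simp add: algebra_simps)
    with farey False j show False by simp
  qed
  ultimately have "ceil_frac q' p' j = n" using ceil_frac_eq_iff[OF q'] by simp
  then show ?thesis by (simp add: n_def)
qed

section \<open>The permutation \<open>\<tau>\<close>\<close>

declare tau.simps [simp del]

lemma tau_base: "a = 1 \<or> a = r - 1 \<Longrightarrow> tau r a i = nat ((int a * int i - 1) mod int r)"
  by (subst tau.simps) auto

lemma tau_rec:
  "1 < a \<Longrightarrow> a + 1 < r \<Longrightarrow> tau r a i =
    (if a \<le> i then tau (r - a) (r mod (r - a)) (i mod (r - a))
     else (r - a) + tau a (nat ((- int r) mod int a)) i)"
  by (subst tau.simps) auto

lemma admissible_children:
  fixes r a :: nat
  assumes a: "1 < a" "a + 1 < r" and cop: "coprime r a"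
  shows "1 < r - a" "0 < r mod (r - a)" "r mod (r - a) < r - a"
    "coprime (r - a) (r mod (r - a))"
    "0 < nat ((- int r) mod int a)" "nat ((- int r) mod int a) < a"
    "coprime a (nat ((- int r) mod int a))"
proof -
  show "1 < r - a" "r mod (r - a) < r - a" using a by simp_all
  have "coprime (r - a) r"
    using cop a gcd_diff2_nat[of a r] by (simp add: coprime_iff_gcd_eq_1 gcd.commute)
  then show copL: "coprime (r - a) (r mod (r - a))" using a by simp
  show "0 < r mod (r - a)"
  proof (rule ccontr)
    assume "\<not> ?thesis"
    with copL have "r - a = 1" by simp
    with a show False by simp
  qed
  have "coprime (int a) (int r)" using cop by (simp add: ac_simps)
  then have "coprime (int a) ((- int r) mod int a)" using a by simp
  moreover have "(- int r) mod int a = int (nat ((- int r) mod int a))" using a by simp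
  ultimately show copR: "coprime a (nat ((- int r) mod int a))"
    by (metis coprime_int_iff)
  show "nat ((- int r) mod int a) < a"
    using a by (simp add: nat_less_iff)
  show "0 < nat ((- int r) mod int a)"
  proof (rule ccontr)
    assume "\<not> ?thesis"
    with copR have "a = 1" by simp
    with a show False by simp
  qed
qed

lemma admissible_induct [consumes 4, case_names base step]:
  fixes r a :: nat
  assumes "1 < r" "0 < a" "a < r" "coprime r a"
    and base: "\<And>r a. 1 < r \<Longrightarrow> 0 < a \<Longrightarrow> a < r \<Longrightarrow> coprime r a \<Longrightarrow> a = 1 \<or> a = r - 1 \<Longrightarrow> P r a"
    and step: "\<And>r a. 1 < a \<Longrightarrow> a + 1 < r \<Longrightarrow> coprime r a \<Longrightarrow>
      P (r - a) (r mod (r - a)) \<Longrightarrow> P a (nat ((- int r) mod int a)) \<Longrightarrow> P r a"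
  shows "P r a"
  using assms(1-4)
proof (induction r arbitrary: a rule: less_induct)
  case (less r)
  show ?case
  proof (cases "a = 1 \<or> a = r - 1")
    case True
    with less.prems show ?thesis by (rule base)
  next
    case False
    with less.prems have a: "1 < a" "a + 1 < r" by auto
    note children = admissible_children[OF a less.prems(4)]
    show ?thesis
      by (rule step[OF a less.prems(4)]) (use less.IH children a in auto)
  qed
qed

lemma zdvd_abs_less_eq_0:
  fixes n x :: int
  assumes "n dvd x" "\<bar>x\<bar> < n"
  shows "x = 0"
  using assms dvd_imp_le_int[of x n] by linarith

lemma inj_on_mod_interval: "inj_on (\<lambda>i. i mod n) {m..<m + n}" for m n :: nat
proof (rule inj_onI)
  fix i j assume ij: "i \<in> {m..<m + n}" "j \<in> {m..<m + n}" and "i mod n = j mod n"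
  then have "int n dvd int i - int j" by (metis mod_eq_dvd_iff of_nat_mod)
  moreover have "\<bar>int i - int j\<bar> < int n" using ij by auto
  ultimately show "i = j" using zdvd_abs_less_eq_0 by fastforce
qed

lemma bij_betw_tau:
  assumes "1 < r" "0 < a" "a < r" "coprime r a"
  shows "bij_betw (tau r a) {..<r} {..<r}"
  using assms
proof (induction rule: admissible_induct)
  case (base r a)
  have "inj_on (tau r a) {..<r}"
  proof (rule inj_onI)
    fix i j assume "i \<in> {..<r}" "j \<in> {..<r}" "tau r a i = tau r a j"
    with base have "int r dvd int a * (int i - int j)" "\<bar>int i - int j\<bar> < int r"
      by (auto simp: tau_base eq_nat_nat_iff mod_eq_dvd_iff algebra_simps)
    moreover have "coprime (int r) (int a)" using base by simp
    ultimately show "i = j"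
      using zdvd_abs_less_eq_0 by (fastforce simp: coprime_dvd_mult_right_iff)
  qed
  moreover have "tau r a ` {..<r} \<subseteq> {..<r}"
    using base by (auto simp: tau_base nat_less_iff)
  ultimately show ?case by (simp add: bij_betw_def endo_inj_surj)
next
  case (step r a)
  define rL aL aR where "rL = r - a" and "aL = r mod (r - a)" and "aR = nat ((- int r) mod int a)"
  have tau: "tau r a i = (if a \<le> i then tau rL aL (i mod rL) else rL + tau a aR i)" for i
    using tau_rec[OF step(1,2)] unfolding rL_def aL_def aR_def by simp
  have r: "r = a + rL" "0 < rL" using step unfolding rL_def by auto
  have left: "tau rL aL (i mod rL) < rL" for i
    using step(4) bij_betw_apply r(2) unfolding rL_def aL_def by fastforce
  have right: "i < a \<Longrightarrow> tau a aR i < a" for i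
    using step(5) bij_betw_apply unfolding aR_def by fastforce
  have "inj_on (tau r a) {..<r}"
  proof (rule inj_onI)
    fix i j assume ij: "i \<in> {..<r}" "j \<in> {..<r}" and eq: "tau r a i = tau r a j"
    consider "a \<le> i" "a \<le> j" | "i < a" "j < a" | "a \<le> i \<longleftrightarrow> j < a" by linarith
    then show "i = j"
    proof cases
      case 1
      then have "i mod rL = j mod rL"
        using eq tau bij_betw_imp_inj_on[OF step(4)] r(2)
        unfolding rL_def aL_def by (simp add: inj_on_def)
      with 1 ij show ?thesis using inj_on_mod_interval[of rL a] r by (simp add: inj_on_def)
    next
      case 2
      then show ?thesis
        using eq tau bij_betw_imp_inj_on[OF step(5)] unfolding aR_def by (simp add: inj_on_def)
    next
      case 3
      then show ?thesis using eq tau left[of i] left[of j] by (auto split: if_splits)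
    qed
  qed
  moreover have "tau r a i < r" if "i < r" for i
    using that tau left[of i] right[of i] r by auto
  then have "tau r a ` {..<r} \<subseteq> {..<r}" by auto
  ultimately show ?case by (simp add: bij_betw_def endo_inj_surj)
qed

section \<open>Farey neighbours along the recursion\<close>

lemma modinv_left_child:
  fixes r a :: nat and b c :: int
  assumes "a < r" "1 < r - a" "0 < b" "b < int r" and abc: "int a * b = c * int r + 1"
  shows "0 < b - c" "b - c < int (r - a)" "(int (r mod (r - a)) * (b - c)) mod int (r - a) = 1"
proof -
  have rL: "int (r - a) = int r - int a" "1 < int (r - a)" using assms by auto
  have farey: "(b - c) * int r = 1 + b * int (r - a)"
    using abc unfolding rL(1) by (simp add: algebra_simps)
  moreover have "0 < b * int (r - a)" using assms rL(2) by (intro mult_pos_pos) auto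
  ultimately have "0 < (b - c) * int r" by linarith
  then show "0 < b - c" by (simp add: zero_less_mult_iff)
  have "b * int (r - a) \<le> (int r - 1) * int (r - a)"
    using assms rL by (intro mult_right_mono) auto
  with farey rL(2) have "(b - c) * int r < int (r - a) * int r"
    by (simp add: algebra_simps)
  then show "b - c < int (r - a)" by (rule mult_right_less_imp_less) simp
  have aL: "int (r mod (r - a)) = int r - int (r - a) * int (r div (r - a))"
    by (simp add: of_nat_mod of_nat_div minus_div_mult_eq_mod [symmetric])
  have "int (r mod (r - a)) * (b - c) - 1 = int (r - a) * (b - int (r div (r - a)) * (b - c))"
    unfolding aL using farey by (simp add: algebra_simps)
  then have "(int (r mod (r - a)) * (b - c)) mod int (r - a) = 1 mod int (r - a)"
    by (simp add: mod_eq_dvd_iff)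
  with rL(2) show "(int (r mod (r - a)) * (b - c)) mod int (r - a) = 1" by simp
qed

lemma modinv_right_child:
  fixes r a :: nat and b c :: int
  assumes "1 < a" "a < r" "0 < b" "b < int r" and abc: "int a * b = c * int r + 1"
  shows "0 < c" "c < int a" "(int (nat ((- int r) mod int a)) * c) mod int a = 1"
proof -
  have "int a * 1 \<le> int a * b" using assms by (intro mult_left_mono) auto
  with abc assms have "0 < c * int r" by linarith
  then show "0 < c" by (simp add: zero_less_mult_iff)
  have "int a * b < int a * int r" using assms by (intro mult_strict_left_mono) auto
  with abc have "c * int r < int a * int r" by linarith
  then show "c < int a" by (rule mult_right_less_imp_less) simp
  have "int (nat ((- int r) mod int a)) = (- int r) mod int a" using assms by simp
  also have "\<dots> = - int r - int a * ((- int r) div int a)" by (simp add: minus_mult_div_eq_mod)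
  finally have aR: "int (nat ((- int r) mod int a)) = - int r - int a * ((- int r) div int a)" .
  have "int (nat ((- int r) mod int a)) * c - 1 = int a * (- b - ((- int r) div int a) * c)"
    unfolding aR using abc by (simp add: algebra_simps)
  then have "(int (nat ((- int r) mod int a)) * c) mod int a = 1 mod int a"
    by (simp add: mod_eq_dvd_iff)
  with assms show "(int (nat ((- int r) mod int a)) * c) mod int a = 1" by simp
qed

lemma ceil_frac_left_child:
  fixes r a :: nat and b c j :: int
  assumes "a < r" "int a * b = c * int r + 1" "0 \<le> j" "j < int r"
  shows "ceil_frac (int r) b j = ceil_frac (int (r - a)) (b - c) j"
proof (rule ceil_frac_farey)
  show "(b - c) * int r - b * int (r - a) = 1" using assms by (simp add: of_nat_diff algebra_simps)
  show "j = 0 \<or> \<not> int r dvd j" using assms zdvd_not_zless by auto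
qed (use assms in auto)

lemma ceil_frac_right_child:
  fixes r a :: nat and b c j :: int
  assumes "0 < a" "a < r" "int a * b = c * int r + 1" "- int a \<le> j" "j < int a"
  shows "ceil_frac (int a) c j = ceil_frac (int r) b j"
proof (cases "0 \<le> j")
  case True
  show ?thesis
  proof (rule ceil_frac_farey)
    show "b * int a - c * int r = 1" using assms by (simp add: algebra_simps)
    show "j = 0 \<or> \<not> int a dvd j" using assms True zdvd_not_zless by auto
  qed (use assms True in auto)
next
  case False
  have "ceil_frac (int r) (- b) (- j) = ceil_frac (int a) (- c) (- j)"
  proof (rule ceil_frac_farey)
    show "- c * int r - - b * int a = 1" using assms by (simp add: algebra_simps)
    show "- j = 0 \<or> \<not> int r dvd - j" using assms False zdvd_not_zless[of "- j" "int r"] by auto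
  qed (use assms False in auto)
  then show ?thesis using ceil_frac_uminus[of _ _ "- j"] by simp
qed

lemma ceil_frac_right_child_shift:
  fixes r a :: nat and b c x :: int
  assumes "0 < a" "a < r" "int a * b = c * int r + 1" "0 \<le> x" "x \<le> int a"
  shows "ceil_frac (int r) b (int (r - a) + x) = ceil_frac (int a) c x + (b - c)"
proof -
  have r: "int r > 0" "int a > 0" using assms by auto
  have "ceil_frac (int r) b (int (r - a) + x) = ceil_frac (int r) b ((x - int a) + 1 * int r)"
    using assms by (simp add: of_nat_diff algebra_simps)
  also have "\<dots> = ceil_frac (int a) c (x - int a) + b"
    using ceil_frac_add_mult[OF r(1), of b "x - int a" 1] ceil_frac_right_child[OF assms(1-3), of "x - int a"] assms
    by simp
  also have "ceil_frac (int a) c (x - int a) = ceil_frac (int a) c (x + (- 1) * int a)" by simp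
  also have "\<dots> = ceil_frac (int a) c x - c" using ceil_frac_add_mult[OF r(2), of c x "- 1"] by simp
  finally show ?thesis by simp
qed

lemma ceil_jump_left_child:
  fixes r a :: nat and b c t :: int
  assumes "a < r" "int a * b = c * int r + 1" "0 \<le> t" "t + 1 < int r"
  shows "ceil_jump (int r) b t = ceil_jump (int (r - a)) (b - c) t"
  unfolding ceil_jump_def using assms ceil_frac_left_child[OF assms(1,2)] by simp

lemma ceil_jump_right_child:
  fixes r a :: nat and b c t :: int
  assumes "0 < a" "a < r" "int a * b = c * int r + 1" "- int a \<le> t" "t + 1 < int a"
  shows "ceil_jump (int a) c t = ceil_jump (int r) b t"
  unfolding ceil_jump_def using assms ceil_frac_right_child[OF assms(1-3)] by simp

lemma ceil_jump_right_child_shift: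
  fixes r a :: nat and b c t :: int
  assumes "0 < a" "a < r" "int a * b = c * int r + 1" "0 \<le> t" "t + 1 \<le> int a"
  shows "ceil_jump (int r) b (int (r - a) + t) = ceil_jump (int a) c t"
  unfolding ceil_jump_def using assms ceil_frac_right_child_shift[OF assms(1-3), of t]
    ceil_frac_right_child_shift[OF assms(1-3), of "t + 1"] by (simp add: algebra_simps)

lemma ceil_jump_tau_base:
  assumes r: "1 < r" and a: "a = 1 \<or> a = r - 1"
    and b: "0 < b" "b < int r" "(int a * b) mod int r = 1"
  shows "ceil_jump (int r) b (int i - 1) = ceil_jump (int r) b (int (tau r a i))"
proof -
  have r0: "int r > 0" using r by simp
  have tau: "ceil_jump (int r) b (int (tau r a i)) = ceil_jump (int r) b (int a * int i - 1)"
    using a r ceil_jump_mod[OF r0] by (simp add: tau_base)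
  show ?thesis
  proof (cases "a = 1")
    case True
    then show ?thesis using tau by simp
  next
    case False
    with a r have a': "int a = int r - 1" by auto
    have "(int a * b) mod int r = 1 mod int r" using b r by simp
    then have "int r dvd int a * b - 1" by (simp add: mod_eq_dvd_iff)
    moreover have "(b + 1) - int r = int r * (b - 1) - (int a * b - 1)"
      unfolding a' by (simp add: algebra_simps)
    ultimately have "int r dvd (b + 1) - int r" by (metis dvd_diff dvd_triv_left)
    with b have b': "b = int r - 1" using zdvd_abs_less_eq_0 by fastforce
    have "int a * int i - 1 = (- int i - 1) + int i * int r" unfolding a' by (simp add: algebra_simps)
    then have "ceil_jump (int r) b (int a * int i - 1) = ceil_jump (int r) b (- int i - 1)"
      using ceil_jump_add_mult[OF r0] by metis
    with tau r show ?thesis unfolding b' by (simp add: ceil_jump_pred_self)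
  qed
qed

text \<open>By \<open>ceil_jump_pred\<close> this says: \<open>i b mod r \<in> [1, b]\<close> iff \<open>\<lceil>t b / r\<rceil>\<close> jumps at \<open>t = \<tau>(i)\<close>.\<close>

lemma ceil_jump_tau:
  assumes "1 < r" "0 < a" "a < r" "coprime r a"
    and "0 < b" "b < int r" "(int a * b) mod int r = 1" "i < r"
  shows "ceil_jump (int r) b (int i - 1) = ceil_jump (int r) b (int (tau r a i))"
  using assms
proof (induction arbitrary: b i rule: admissible_induct)
  case (base r a)
  then show ?case by (intro ceil_jump_tau_base) auto
next
  case (step r a)
  define rL aL aR where "rL = r - a" and "aL = r mod (r - a)" and "aR = nat ((- int r) mod int a)"
  define c where "c = (int a * b) div int r"
  have abc: "int a * b = c * int r + 1"
    using step.prems(3) div_mult_mod_eq[of "int a * b" "int r"] unfolding c_def by simp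
  note children = admissible_children[OF step(1-3), folded rL_def aL_def aR_def]
  have r: "r = a + rL" "1 < rL" using children step(2) unfolding rL_def by auto
  have bij_L: "bij_betw (tau rL aL) {..<rL} {..<rL}"
    using children by (intro bij_betw_tau) auto
  have bij_R: "bij_betw (tau a aR) {..<a} {..<a}"
    using children step(1,2) by (intro bij_betw_tau) auto
  note modinv_L = modinv_left_child[OF _ _ step.prems(1,2) abc, folded rL_def aL_def]
  note modinv_R = modinv_right_child[OF step(1) _ step.prems(1,2) abc, folded aR_def]
  note jump_L = ceil_jump_left_child[OF _ abc, folded rL_def]
  note jump_R = ceil_jump_right_child[OF _ _ abc]
  show ?case
  proof (cases "a \<le> i")
    case True
    define s where "s = tau rL aL (i mod rL)"
    have s: "s < rL" "tau r a i = s"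
      using bij_betw_apply[OF bij_L] tau_rec[OF step(1,2)] True r
      unfolding s_def rL_def aL_def aR_def by auto
    have "(int (i mod rL) - 1) mod int rL = (int i - 1) mod int rL"
      by (simp add: of_nat_mod mod_diff_left_eq)
    moreover have "int rL > 0" using r by simp
    ultimately have "ceil_jump (int rL) (b - c) (int i - 1) = ceil_jump (int rL) (b - c) (int (i mod rL) - 1)"
      by (metis ceil_jump_mod)
    also have "\<dots> = ceil_jump (int rL) (b - c) (int s)"
      using step.IH(1)[of "b - c" "i mod rL"] modinv_L r unfolding s_def rL_def aL_def by auto
    finally show ?thesis
      using jump_L[of "int i - 1"] jump_L[of "int s"] True step s r unfolding rL_def by simp
  next
    case False
    define s where "s = tau a aR i"
    have s: "s < a" "tau r a i = rL + s"
      using bij_betw_apply[OF bij_R] tau_rec[OF step(1,2)] False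
      unfolding s_def rL_def aL_def aR_def by auto
    have "ceil_jump (int r) b (int i - 1) = ceil_jump (int a) c (int i - 1)"
      using jump_R False step(1,2) by simp
    also have "\<dots> = ceil_jump (int a) c (int s)"
      using step.IH(2)[of c i] modinv_R False step(2) unfolding s_def aR_def by auto
    also have "\<dots> = ceil_jump (int r) b (int (tau r a i))"
      using s step(1,2) ceil_jump_right_child_shift[OF _ _ abc, of "int s", folded rL_def] by simp
    finally show ?thesis .
  qed
qed

section \<open>The divisors \<open>R\<^sub>i\<close>\<close>

lemma sum_fun_apply: "(\<Sum>i\<in>A. f i) x = (\<Sum>i\<in>A. f i x)"
  by (induction A rule: infinite_finite_induct) auto

lemma sdiv_Ddiv_apply: "sdiv c (Ddiv i) \<rho> = (if \<rho> = RayD i then c else 0)"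
  unfolding sdiv_def Ddiv_def by simp

lemma Zdiv_apply [simp]:
  "Zdiv r a i (RayD k) = of_bool (tau r a i < k \<and> k \<le> r)"
  "Zdiv r a i RayE1 = 0"
  unfolding Zdiv_def sum_fun_apply Ddiv_def by (auto simp: Suc_le_eq)

lemma DZdiv_apply [simp]:
  "DZdiv r a (RayD k) = (if k \<le> r then of_nat k / of_nat r else 0)"
  "DZdiv r a RayE1 = 0"
  unfolding DZdiv_def sum_fun_apply sdiv_Ddiv_apply by (simp_all add: e3p_def)

lemma sum_e1p_apply [simp]:
  "(\<Sum>i\<in>{0..r}. sdiv (e1p r a i) (Ddiv i)) (RayD k) = (if k \<le> r then e1p r a k else 0)"
  "(\<Sum>i\<in>{0..r}. sdiv (e1p r a i) (Ddiv i)) RayE1 = 0"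
  unfolding sum_fun_apply sdiv_Ddiv_apply by simp_all

definition binv_res :: "nat \<Rightarrow> nat \<Rightarrow> int" where
  "binv_res r a = int (binv r a mod r)"

text \<open>The \<open>m < r\<close> with \<open>m a \<equiv> i (mod r)\<close>: the position of \<open>i\<close> on the cycle \<open>0, a, 2a, \<dots>\<close>.\<close>

definition cycle_pos :: "nat \<Rightarrow> nat \<Rightarrow> nat \<Rightarrow> nat" where
  "cycle_pos r a i = nat ((int i * binv_res r a) mod int r)"

definition cycle_term :: "nat \<Rightarrow> nat \<Rightarrow> nat \<Rightarrow> qdiv" where
  "cycle_term r a m = Zdiv r a ((m * a) mod r) - DZdiv r a"

definition Rsol :: "nat \<Rightarrow> nat \<Rightarrow> nat \<Rightarrow> qdiv" where
  "Rsol r a i = (if i < r then \<Sum>m\<in>{1..cycle_pos r a i}. cycle_term r a m else 0)"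

context
  fixes r a :: nat
  assumes r: "1 < r" and a: "0 < a" "a < r" and cop: "coprime r a"
begin

lemma binv_res_bounds: "0 < binv_res r a" "binv_res r a < int r" "(int a * binv_res r a) mod int r = 1"
proof -
  obtain x y where "a * x = r * y + gcd a r" using bezout_nat[of a r] a by auto
  with cop have "a * x = 1 + r * y" by (simp add: coprime_iff_gcd_eq_1 gcd.commute)
  then have "(a * x) mod r = 1 mod r" by (simp only: mod_mult_self2)
  then have "(a * binv r a) mod r = 1 mod r" unfolding binv_def by (rule someI)
  then have "(a * (binv r a mod r)) mod r = 1" using r by (simp add: mod_mult_right_eq)
  then show inv: "(int a * binv_res r a) mod int r = 1" unfolding binv_res_def
    by (metis of_nat_1 of_nat_mod of_nat_mult)
  show "binv_res r a < int r" unfolding binv_res_def using r by simp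
  have "binv_res r a \<noteq> 0" using inv by auto
  moreover have "0 \<le> binv_res r a" unfolding binv_res_def by simp
  ultimately show "0 < binv_res r a" by simp
qed

lemma mod_mult_binv: "(x * (int a * binv_res r a)) mod int r = x mod int r"
  using binv_res_bounds(3) by (metis mod_mult_right_eq mult.right_neutral)

lemma cycle_pos_lt: "cycle_pos r a i < r"
  unfolding cycle_pos_def using r by (simp add: nat_less_iff)

lemma mult_cycle_pos: "i < r \<Longrightarrow> (cycle_pos r a i * a) mod r = i"
proof -
  assume "i < r"
  have "int ((cycle_pos r a i * a) mod r) = ((int i * binv_res r a) mod int r * int a) mod int r"
    unfolding cycle_pos_def using r by (simp add: of_nat_mod)
  also have "\<dots> = (int i * (int a * binv_res r a)) mod int r"
    by (simp add: mod_simps ac_simps)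
  also have "\<dots> = int i" using mod_mult_binv \<open>i < r\<close> by simp
  finally show ?thesis by simp
qed

lemma cycle_pos_mult: "cycle_pos r a ((m * a) mod r) = m mod r"
proof -
  have "(int ((m * a) mod r) * binv_res r a) mod int r = (int m * (int a * binv_res r a)) mod int r"
    by (simp add: of_nat_mod mod_simps ac_simps)
  also have "\<dots> = int (m mod r)" using mod_mult_binv by (simp add: of_nat_mod)
  finally show ?thesis unfolding cycle_pos_def by simp
qed

lemma cycle_pos_pred: "i < r \<Longrightarrow> cycle_pos r a ((i + r - a) mod r) = (cycle_pos r a i + r - 1) mod r"
proof -
  assume "i < r"
  define n where "n = cycle_pos r a i"
  have "int ((i + r - a) mod r) = (int ((n * a) mod r) + int r - int a) mod int r"
    using mult_cycle_pos[OF \<open>i < r\<close>] a by (simp add: n_def of_nat_mod of_nat_diff)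
  also have "\<dots> = (int n * int a - int a + (1 - int ((n * a) div r)) * int r) mod int r"
    by (simp add: of_nat_mod of_nat_div minus_div_mult_eq_mod [symmetric] algebra_simps)
  also have "\<dots> = (int n * int a - int a) mod int r" by (rule mod_mult_self1)
  also have "\<dots> = (int n * int a - int a + int a * int r) mod int r" by (rule mod_mult_self1[symmetric])
  also have "\<dots> = int (((n + r - 1) * a) mod r)"
    using r by (simp only: of_nat_mod of_nat_mult of_nat_diff) (simp add: algebra_simps)
  finally have "(i + r - a) mod r = ((n + r - 1) * a) mod r" by simp
  then show ?thesis by (simp add: cycle_pos_mult n_def)
qed

lemma sum_mult_mod_reindex:
  "A \<subseteq> {..<r} \<Longrightarrow> (\<Sum>m\<in>A. f ((m * a) mod r)) = (\<Sum>i | i < r \<and> cycle_pos r a i \<in> A. f i)"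
  by (rule sum.reindex_bij_witness[where i = "cycle_pos r a" and j = "\<lambda>m. (m * a) mod r"])
    (use r in \<open>auto simp: cycle_pos_mult mult_cycle_pos subset_iff\<close>)

lemma sum_tau_less: "k \<le> r \<Longrightarrow> (\<Sum>i<r. of_bool (tau r a i < k) :: 'b::comm_semiring_1) = of_nat k"
  using sum.reindex_bij_betw[OF bij_betw_tau[OF r a cop], of "\<lambda>t. of_bool (t < k) :: 'b"]
    sum_lessThan_if_less[of k r "\<lambda>_. 1 :: 'b"] by (simp add: of_bool_def)

lemma sum_tau_less_cycle_prefix:
  assumes "k \<le> r"
  shows "(\<Sum>m\<in>{1..nat (binv_res r a)}. of_bool (tau r a ((m * a) mod r) < k) :: int) =
    ceil_frac (int r) (binv_res r a) (int k)"
proof -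
  let ?b = "binv_res r a" and ?ind = "\<lambda>t. of_bool (t < k) :: int"
  note b = binv_res_bounds
  have "(\<Sum>m\<in>{1..nat ?b}. ?ind (tau r a ((m * a) mod r))) =
      (\<Sum>i | i < r \<and> cycle_pos r a i \<in> {1..nat ?b}. ?ind (tau r a i))"
    using b by (intro sum_mult_mod_reindex) auto
  also have "\<dots> = (\<Sum>i<r. ceil_jump (int r) ?b (int i - 1) * ?ind (tau r a i))"
  proof -
    let ?P = "\<lambda>i. cycle_pos r a i \<in> {1..nat ?b}"
    have P: "?P i \<longleftrightarrow> ceil_jump (int r) ?b (int i - 1) = 1" for i
      using ceil_jump_pred[of "int r" ?b "int i"] b r unfolding cycle_pos_def by auto
    have jump: "ceil_jump (int r) ?b (int i - 1) \<in> {0, 1}" for i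
      using ceil_jump_pred[of "int r" ?b "int i"] b by auto
    have "(\<Sum>i | i < r \<and> ?P i. ?ind (tau r a i)) = (\<Sum>i \<in> {i \<in> {..<r}. ?P i}. ?ind (tau r a i))"
      by (rule sum.cong) auto
    also have "\<dots> = (\<Sum>i<r. if ?P i then ?ind (tau r a i) else 0)"
      by (rule sum.inter_filter) simp
    also have "\<dots> = (\<Sum>i<r. ceil_jump (int r) ?b (int i - 1) * ?ind (tau r a i))"
      using P jump by (intro sum.cong) auto
    finally show ?thesis .
  qed
  also have "\<dots> = (\<Sum>i<r. ceil_jump (int r) ?b (int (tau r a i)) * ?ind (tau r a i))"
    using ceil_jump_tau[OF r a cop] b by (intro sum.cong) auto
  also have "\<dots> = (\<Sum>t<r. ceil_jump (int r) ?b (int t) * ?ind t)"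
    by (rule sum.reindex_bij_betw[OF bij_betw_tau[OF r a cop]])
  also have "\<dots> = (\<Sum>t<r. if t < k then ceil_jump (int r) ?b (int t) else 0)"
    by (rule sum.cong) auto
  also have "\<dots> = (\<Sum>t<k. ceil_jump (int r) ?b (int t))"
    by (rule sum_lessThan_if_less[OF assms])
  finally show ?thesis by (simp add: sum_ceil_jump)
qed

lemma sum_cycle_term: "(\<Sum>m<r. cycle_term r a m) = 0"
proof
  fix \<rho>
  have "(\<Sum>m<r. cycle_term r a m) \<rho> = (\<Sum>i<r. Zdiv r a i \<rho> - DZdiv r a \<rho>)"
    unfolding cycle_term_def sum_fun_apply
    using sum_mult_mod_reindex[of "{..<r}" "\<lambda>i. Zdiv r a i \<rho> - DZdiv r a \<rho>"]
    by (simp add: cycle_pos_lt lessThan_def)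
  also have "\<dots> = 0"
  proof (cases \<rho>)
    case (RayD k)
    then show ?thesis
      using sum_tau_less[of k, where 'b = rat] r by (simp add: sum_subtractf)
  qed simp
  finally show "(\<Sum>m<r. cycle_term r a m) \<rho> = 0 \<rho>" by simp
qed

lemma Rcond_Rsol: "Rcond r a (Rsol r a)"
  unfolding Rcond_def
proof (intro conjI allI impI)
  show "Rsol r a 0 = 0" unfolding Rsol_def cycle_pos_def using r by simp
  show "Rsol r a i = 0" if "r \<le> i" for i using that unfolding Rsol_def by simp
  show "is_qdiv r (Rsol r a i)" for i
    unfolding is_qdiv_def Rsol_def cycle_term_def by (simp add: sum_fun_apply)
next
  fix i assume i: "i < r"
  let ?n = "cycle_pos r a i" and ?j = "(i + r - a) mod r"
  have j: "?j < r" using r by simp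
  have last: "cycle_term r a ?n = Zdiv r a i - DZdiv r a"
    unfolding cycle_term_def using mult_cycle_pos[OF i] by simp
  show "Zdiv r a i = DZdiv r a + Rsol r a i - Rsol r a ?j"
  proof (cases "?n = 0")
    case True
    have "{..<r} = insert 0 {1..r - 1}" using r by auto
    then have "cycle_term r a 0 + (\<Sum>m\<in>{1..r - 1}. cycle_term r a m) = 0"
      using sum_cycle_term by simp
    moreover have "cycle_pos r a ?j = r - 1" using True cycle_pos_pred[OF i] r by simp
    ultimately have "Rsol r a ?j = - cycle_term r a 0"
      using j unfolding Rsol_def by (simp add: eq_neg_iff_add_eq_0 add.commute)
    moreover have "Rsol r a i = 0" using True i unfolding Rsol_def by simp
    ultimately show ?thesis using True last by (simp add: algebra_simps)
  next
    case False
    then have "?n + r - 1 = (?n - 1) + r" by simp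
    then have "(?n + r - 1) mod r = ?n - 1"
      using cycle_pos_lt[of i] by (simp only: mod_add_self2) simp
    then have "cycle_pos r a ?j = ?n - 1" using cycle_pos_pred[OF i] by simp
    moreover have "{1..?n} = insert ?n {1..?n - 1}" using False by auto
    ultimately show ?thesis
      using False last i j unfolding Rsol_def by simp
  qed
qed

lemma mult_mod_pred: "((Suc m * a) mod r + r - a) mod r = (m * a) mod r"
proof -
  define x where "x = ((Suc m * a) mod r + r - a) mod r"
  have "cycle_pos r a x = (Suc m mod r + r - 1) mod r"
    unfolding x_def using r cycle_pos_pred[of "(Suc m * a) mod r"]
    by (simp only: cycle_pos_mult) simp
  also have "\<dots> = (Suc m mod r + (r - 1)) mod r" using r by simp
  also have "\<dots> = (Suc m + (r - 1)) mod r" by (rule mod_add_left_eq)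
  also have "Suc m + (r - 1) = m + r" using r by simp
  also have "(m + r) mod r = m mod r" by simp
  finally have "x = ((m mod r) * a) mod r"
    using mult_cycle_pos[of x] r unfolding x_def by simp
  then show ?thesis unfolding x_def by (simp add: mod_mult_left_eq)
qed

lemma Rcond_unique:
  assumes R: "Rcond r a R" and R': "Rcond r a R'"
  shows "R = R'"
proof
  have cycle: "R ((m * a) mod r) = R' ((m * a) mod r)" for m
  proof (induction m)
    case 0
    then show ?case using R R' unfolding Rcond_def by simp
  next
    case (Suc m)
    define j where "j = (Suc m * a) mod r"
    have "j < r" using r unfolding j_def by simp
    then have "Zdiv r a j = DZdiv r a + R j - R ((m * a) mod r)"
      and "Zdiv r a j = DZdiv r a + R' j - R' ((m * a) mod r)"
      using R R' mult_mod_pred unfolding Rcond_def j_def by metis+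
    with Suc.IH show ?case unfolding j_def[symmetric] by (simp add: algebra_simps)
  qed
  fix i
  show "R i = R' i"
  proof (cases "i < r")
    case True
    then show ?thesis using cycle[of "cycle_pos r a i"] mult_cycle_pos by simp
  next
    case False
    then show ?thesis using R R' unfolding Rcond_def by simp
  qed
qed

lemma e1p_eq_ceil_frac:
  "e1p r a k = of_int (ceil_frac (int r) (binv_res r a) (int k)) - of_int (binv_res r a) * of_nat k / of_nat r"
proof -
  let ?b = "binv_res r a"
  have "(- int k * int (binv r a)) mod int r = (- int k * (int (binv r a) mod int r)) mod int r"
    by (metis mod_mult_right_eq)
  also have "\<dots> = (- int k * ?b) mod int r" unfolding binv_res_def by (simp add: of_nat_mod)
  also have "\<dots> = - int k * ?b + int r * ceil_frac (int r) ?b (int k)"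
    unfolding ceil_frac_def by (simp add: minus_mult_div_eq_mod [symmetric])
  finally have e1: "(- int k * int (binv r a)) mod int r = - int k * ?b + int r * ceil_frac (int r) ?b (int k)" .
  show ?thesis using r unfolding e1p_def e1 by (simp add: field_simps)
qed

lemma Rsol_1: "Rsol r a 1 = (\<Sum>i\<in>{0..r}. sdiv (e1p r a i) (Ddiv i))"
proof
  fix \<rho>
  let ?b = "binv_res r a"
  note b = binv_res_bounds
  have R1: "Rsol r a 1 = (\<Sum>m\<in>{1..nat ?b}. cycle_term r a m)"
    unfolding Rsol_def cycle_pos_def using r b by simp
  show "Rsol r a 1 \<rho> = (\<Sum>i\<in>{0..r}. sdiv (e1p r a i) (Ddiv i)) \<rho>"
  proof (cases "\<exists>k \<le> r. \<rho> = RayD k")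
    case True
    then obtain k where k: "k \<le> r" "\<rho> = RayD k" by blast
    have "Rsol r a 1 \<rho> =
        of_int (\<Sum>m\<in>{1..nat ?b}. of_bool (tau r a ((m * a) mod r) < k)) - of_int ?b * (of_nat k / of_nat r)"
      unfolding R1 sum_fun_apply cycle_term_def using k b by (simp add: sum_subtractf of_int_sum)
    also have "\<dots> = e1p r a k"
      using sum_tau_less_cycle_prefix[OF k(1)] e1p_eq_ceil_frac by simp
    finally show ?thesis using k by simp
  next
    case False
    then show ?thesis unfolding R1 cycle_term_def by (cases \<rho>) (auto simp: sum_fun_apply sdiv_Ddiv_apply)
  qed
qed

end

theorem mainTheorem6:
  fixes r a :: nat
  assumes "1 < r" and "0 < a" and "a < r" and "coprime r a"
  shows "(\<exists>!R. Rcond r a R) \<and>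
    (\<forall>R. Rcond r a R \<longrightarrow>
       R 1 = DXdiv r a - E1div \<and> R 1 = (\<Sum>i\<in>{0..r}. sdiv (e1p r a i) (Ddiv i)))"
proof -
  have "Rcond r a R \<longleftrightarrow> R = Rsol r a" for R
    using Rcond_Rsol[OF assms] Rcond_unique[OF assms] by blast
  moreover have "DXdiv r a - E1div = (\<Sum>i\<in>{0..r}. sdiv (e1p r a i) (Ddiv i))"
    unfolding DXdiv_def by simp
  ultimately show ?thesis using Rsol_1[OF assms] by auto
qed

end
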